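(* Let $N_t\ge 2$, $N_r\ge 1$ be integers, $\rho>0$, and let $\mathbf{h}_1,\dots,\mathbf{h}_{N_t}$ be i.i.d. $N_r\times 1$ vectors with i.i.d. $\mathcal{CN}(0,1)$ entries. Fix $k\in\{1,\dots,N_t\}$ and define $$X_{\rm MRC}=\frac{\|\mathbf{h}_k\|^2}{1+\frac{\rho}{N_t}\sum_{j\ne k}\frac{|\mathbf{h}_k^\dagger\mathbf{h}_j|^2}{\|\mathbf{h}_k\|^2}}.$$ Then for all $x\ge 0$, $$\Pr(X_{\rm MRC}\le x)=1-\frac{e^{-x}}{\left(1+\frac{\rho}{N_t}x\right)^{N_t-1}}\sum_{k'=0}^{N_r-1}\sum_{p=0}^{k'}\frac{\alpha_{p,k'}\,x^{k'}}{\left(1+\frac{\rho}{N_t}x\right)^{p}},\qquad \alpha_{p,k'}=\frac{\binom{N_t+p-2}{p}\left(\frac{\rho}{N_t}\right)^p}{(k'-p)!}.$$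
   Context: $X_{\rm MRC}$ is the normalized SINR ($N_t/\rho$ times the SINR) at the output of a maximum ratio combining receiver $\mathbf{w}=\mathbf{h}_k$ for the data stream from transmit antenna $k$, in the model $\mathbf{y}=\mathbf{H}\mathbf{x}+\mathbf{n}$ with $\mathbf{H}=[\mathbf{h}_1,\dots,\mathbf{h}_{N_t}]$, $\mathbf{n}\sim\mathcal{CN}(\mathbf{0},N_0\mathbf{I})$, independent streams each of power $P/N_t$, and $\rho=P/N_0$. *)

theory Defs
  imports "HOL-Probability.Probability"
begin

text \<open>Vectors in C^Nr are represented as functions nat => complex, only the
indices i < Nr being relevant. The channel is h w j i: entry i (0..Nr-1) of
column j (0..Nt-1) of H, at sample point w.\<close>

definition vec_norm_sq :: "nat \<Rightarrow> (nat \<Rightarrow> complex) \<Rightarrow> real" where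
  "vec_norm_sq Nr v = (\<Sum>i<Nr. (cmod (v i))^2)"

definition herm_inner :: "nat \<Rightarrow> (nat \<Rightarrow> complex) \<Rightarrow> (nat \<Rightarrow> complex) \<Rightarrow> complex" where
  "herm_inner Nr u v = (\<Sum>i<Nr. cnj (u i) * v i)"

definition X_MRC :: "nat \<Rightarrow> nat \<Rightarrow> real \<Rightarrow> nat \<Rightarrow> (nat \<Rightarrow> nat \<Rightarrow> complex) \<Rightarrow> real" where
  "X_MRC Nt Nr \<rho> k H =
     vec_norm_sq Nr (H k) /
     (1 + \<rho> / real Nt * (\<Sum>j\<in>{..<Nt} - {k}.
          (cmod (herm_inner Nr (H k) (H j)))^2 / vec_norm_sq Nr (H k)))"

text \<open>All entries h_j(i), j < Nt, i < Nr, are i.i.d. CN(0,1): their real and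
imaginary parts form a mutually independent family of real random variables,
each distributed N(0,1/2).\<close>
definition iid_CN01_entries ::
  "'a measure \<Rightarrow> nat \<Rightarrow> nat \<Rightarrow> ('a \<Rightarrow> nat \<Rightarrow> nat \<Rightarrow> complex) \<Rightarrow> bool" where
  "iid_CN01_entries M Nt Nr h \<longleftrightarrow>
     prob_space.indep_vars M (\<lambda>_. borel)
       (\<lambda>(j, i, b) w. if b then Re (h w j i) else Im (h w j i))
       ({..<Nt} \<times> {..<Nr} \<times> (UNIV :: bool set)) \<and>
     (\<forall>j<Nt. \<forall>i<Nr.
        distributed M lborel (\<lambda>w. Re (h w j i)) (normal_density 0 (1 / sqrt 2)) \<and>
        distributed M lborel (\<lambda>w. Im (h w j i)) (normal_density 0 (1 / sqrt 2)))"

definition alpha_coef :: "nat \<Rightarrow> real \<Rightarrow> nat \<Rightarrow> nat \<Rightarrow> real" where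
  "alpha_coef Nt \<rho> p k' = real ((Nt + p - 2) choose p) * (\<rho> / real Nt) ^ p / fact (k' - p)"

end

theory Submission
  imports Defs
begin

(* Write G = |h_k|^2 and T = sum_{j<>k} |u^H h_j|^2 with u = h_k/|h_k|, so that
   X_MRC = G / (1 + (rho/Nt) T).  Plane Lebesgue measure is invariant under
       rotations (a rotation is a product of three shears), hence so is the law
       of a pair of i.i.d. centred normals.  Consequently a circularly symmetric
       complex Gaussian stays one under multiplication by a complex scalar and
       under independent sums, and its squared modulus is exponential (the
       Gaussian tail integral outside a disc, via the substitution y = x s).
   (2) Conditioning, in the locale rayleigh_channel.  G is Erlang(Nr-1) (a sum
       of Nr exponentials).  Given h_k, the u^H h_j (j <> k) are i.i.d. CN(0,1),
       so T is Erlang(Nt-2) independently of h_k.  Splitting the coordinates into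
       the block of h_k and the block of the interferers and applying Tonelli gives
       P(X_MRC <= x) = int f_T(t) F_G(x (1 + rho t/Nt)) dt.
   (3) Evaluation.  Expanding the Erlang CDF, the binomial theorem and the
       exponentially tilted Erlang moments give the closed form. *)

lemma emeasure_lborel_translate:
  fixes A :: "real set" assumes [measurable]: "A \<in> sets borel"
  shows "emeasure lborel {x. x + c \<in> A} = emeasure lborel A"
proof -
  have "emeasure lborel A = emeasure (distr lborel borel ((+) c)) A"
    by (simp add: lborel_distr_plus)
  also have "\<dots> = emeasure lborel ((+) c -` A \<inter> space lborel)"
    by (rule emeasure_distr) auto
  also have "(+) c -` A \<inter> space lborel = {x. x + c \<in> A}" by (auto simp: add.commute)
  finally show ?thesis by simp
qed

text \<open>A shear along the first coordinate preserves plane Lebesgue measure: on every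
  horizontal line it is a translation.\<close>
lemma lborel_pair_shear_fst:
  fixes f :: "real \<Rightarrow> real" assumes [measurable]: "f \<in> borel_measurable borel"
  shows "distr (lborel \<Otimes>\<^sub>M lborel) (lborel \<Otimes>\<^sub>M lborel) (\<lambda>(x,y). (x + f y, y)) = lborel \<Otimes>\<^sub>M lborel"
proof (rule pair_measure_eqI[symmetric])
  let ?S = "\<lambda>(x,y). (x + f y, y::real)"
  show "sets (lborel \<Otimes>\<^sub>M lborel) = sets (distr (lborel \<Otimes>\<^sub>M lborel) (lborel \<Otimes>\<^sub>M lborel) ?S)"
    by simp
  fix A B :: "real set" assume "A \<in> sets lborel" and "B \<in> sets lborel"
  then have [measurable]: "A \<in> sets borel" "B \<in> sets borel" by auto
  have "emeasure (distr (lborel \<Otimes>\<^sub>M lborel) (lborel \<Otimes>\<^sub>M lborel) ?S) (A \<times> B)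
     = emeasure (lborel \<Otimes>\<^sub>M lborel) (?S -` (A \<times> B) \<inter> space (lborel \<Otimes>\<^sub>M lborel))"
    by (rule emeasure_distr) auto
  also have "\<dots> = \<integral>\<^sup>+ y. emeasure lborel ((\<lambda>x. (x, y)) -` (?S -` (A \<times> B) \<inter> space (lborel \<Otimes>\<^sub>M lborel))) \<partial>lborel"
    by (rule lborel_pair.emeasure_pair_measure_alt2)
       (rule measurable_sets[where A="borel \<Otimes>\<^sub>M borel"], measurable)
  also have "\<dots> = \<integral>\<^sup>+ y. emeasure lborel A * indicator B y \<partial>lborel"
  proof (rule nn_integral_cong)
    fix y :: real
    have "(\<lambda>x. (x, y)) -` (?S -` (A \<times> B) \<inter> space (lborel \<Otimes>\<^sub>M lborel))
       = (if y \<in> B then {x. x + f y \<in> A} else {})" by (auto simp: space_pair_measure)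
    then show "emeasure lborel ((\<lambda>x. (x, y)) -` (?S -` (A \<times> B) \<inter> space (lborel \<Otimes>\<^sub>M lborel)))
        = emeasure lborel A * indicator B y"
      using emeasure_lborel_translate[of A "f y"] by (simp split: split_indicator)
  qed
  also have "\<dots> = emeasure lborel A * emeasure lborel B"
    by (simp add: nn_integral_cmult_indicator)
  finally show "emeasure lborel A * emeasure lborel B = emeasure (distr (lborel \<Otimes>\<^sub>M lborel) (lborel \<Otimes>\<^sub>M lborel) ?S) (A \<times> B)"
    by simp
qed (auto intro: lborel.sigma_finite_measure_axioms)

lemma lborel_pair_shear_snd:
  fixes f :: "real \<Rightarrow> real" assumes [measurable]: "f \<in> borel_measurable borel"
  shows "distr (lborel \<Otimes>\<^sub>M lborel) (lborel \<Otimes>\<^sub>M lborel) (\<lambda>(x,y). (x, y + f x)) = lborel \<Otimes>\<^sub>M lborel"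
proof (rule pair_measure_eqI[symmetric])
  let ?S = "\<lambda>(x,y). (x, y + f x::real)"
  show "sets (lborel \<Otimes>\<^sub>M lborel) = sets (distr (lborel \<Otimes>\<^sub>M lborel) (lborel \<Otimes>\<^sub>M lborel) ?S)"
    by simp
  fix A B :: "real set" assume "A \<in> sets lborel" and "B \<in> sets lborel"
  then have [measurable]: "A \<in> sets borel" "B \<in> sets borel" by auto
  have "emeasure (distr (lborel \<Otimes>\<^sub>M lborel) (lborel \<Otimes>\<^sub>M lborel) ?S) (A \<times> B)
     = emeasure (lborel \<Otimes>\<^sub>M lborel) (?S -` (A \<times> B) \<inter> space (lborel \<Otimes>\<^sub>M lborel))"
    by (rule emeasure_distr) auto
  also have "\<dots> = \<integral>\<^sup>+ x. emeasure lborel (Pair x -` (?S -` (A \<times> B) \<inter> space (lborel \<Otimes>\<^sub>M lborel))) \<partial>lborel"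
    by (rule lborel.emeasure_pair_measure_alt)
       (rule measurable_sets[where A="borel \<Otimes>\<^sub>M borel"], measurable)
  also have "\<dots> = \<integral>\<^sup>+ x. emeasure lborel B * indicator A x \<partial>lborel"
  proof (rule nn_integral_cong)
    fix x :: real
    have "Pair x -` (?S -` (A \<times> B) \<inter> space (lborel \<Otimes>\<^sub>M lborel))
       = (if x \<in> A then {y. y + f x \<in> B} else {})" by (auto simp: space_pair_measure)
    then show "emeasure lborel (Pair x -` (?S -` (A \<times> B) \<inter> space (lborel \<Otimes>\<^sub>M lborel)))
        = emeasure lborel B * indicator A x"
      using emeasure_lborel_translate[of B "f x"] by (simp split: split_indicator)
  qed
  also have "\<dots> = emeasure lborel A * emeasure lborel B"
    by (subst nn_integral_cmult_indicator) (auto simp: mult.commute)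
  finally show "emeasure lborel A * emeasure lborel B = emeasure (distr (lborel \<Otimes>\<^sub>M lborel) (lborel \<Otimes>\<^sub>M lborel) ?S) (A \<times> B)"
    by simp
qed (auto intro: lborel.sigma_finite_measure_axioms)

lemma lborel_pair_negate:
  "distr (lborel \<Otimes>\<^sub>M lborel) (lborel \<Otimes>\<^sub>M lborel) (\<lambda>(x,y). (-x, -y::real)) = (lborel \<Otimes>\<^sub>M lborel :: (real\<times>real) measure)"
proof -
  have "distr lborel borel (uminus::real\<Rightarrow>real) \<Otimes>\<^sub>M distr lborel borel (uminus::real\<Rightarrow>real)
      = distr (lborel \<Otimes>\<^sub>M lborel) (borel \<Otimes>\<^sub>M borel) (\<lambda>(x,y). (-x::real, -y::real))"
    by (rule pair_measure_distr) (auto simp: lborel_distr_uminus intro: lborel.sigma_finite_measure_axioms)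
  moreover have "distr (lborel \<Otimes>\<^sub>M lborel) (borel \<Otimes>\<^sub>M borel) (\<lambda>(x,y). (-x::real, -y::real))
      = distr (lborel \<Otimes>\<^sub>M lborel) (lborel \<Otimes>\<^sub>M lborel) (\<lambda>(x,y). (-x, -y::real))"
    by (rule distr_cong) auto
  ultimately show ?thesis by (simp add: lborel_distr_uminus)
qed

text \<open>Every rotation other than the one by \<open>\<pi>\<close> factors into three shears, with
  \<open>t = tan(\<theta>/2) = s/(1+c)\<close>.\<close>
lemma rotation_three_shears:
  fixes c s :: real assumes cs: "c^2 + s^2 = 1" and c: "c \<noteq> -1"
  defines "t \<equiv> s / (1 + c)"
  shows "(\<lambda>(x,y). (x - t * y, y)) \<circ> (\<lambda>(x,y). (x, y + s*x)) \<circ> (\<lambda>(x,y). (x - t * y, y))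
       = (\<lambda>(x,y). (c*x - s*y, s*x + c*y))"
proof -
  have c1: "1 + c \<noteq> 0" using c by linarith
  have ts: "1 - t * s = c"
  proof -
    have "t * s = (1 - c^2)/(1+c)" using cs by (simp add: t_def power2_eq_square algebra_simps)
    also have "\<dots> = 1 - c" using c1 by (simp add: field_simps power2_eq_square)
    finally show ?thesis by simp
  qed
  have ts2: "-2*t + t*t * s = -s"
  proof -
    have "-2*t + t*t * s = -t*(1 + (1 - t * s))" by (simp add: algebra_simps)
    also have "\<dots> = -s" using ts c1 by (simp add: t_def)
    finally show ?thesis .
  qed
  have "x - t * y - t*(y + s*(x - t * y)) = c*x - s*y" for x y
  proof -
    have "x - t * y - t*(y + s*(x - t * y)) = (1 - t * s)*x + (-2*t + t*t * s)*y" by (simp add: algebra_simps)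
    then show ?thesis using ts ts2 by simp
  qed
  moreover have "y + s*(x - t * y) = s*x + c*y" for x y
  proof -
    have "y + s*(x - t * y) = s*x + (1 - t * s)*y" by (simp add: algebra_simps)
    then show ?thesis using ts by simp
  qed
  ultimately show ?thesis by (auto simp: fun_eq_iff)
qed

lemma lborel_pair_rotation:
  fixes c s :: real assumes cs: "c^2 + s^2 = 1"
  shows "distr (lborel \<Otimes>\<^sub>M lborel) (lborel \<Otimes>\<^sub>M lborel) (\<lambda>(x,y). (c*x - s*y, s*x + c*y)) = lborel \<Otimes>\<^sub>M lborel"
proof (cases "c = -1")
  case True
  then have "s = 0" using cs by (simp add: power2_eq_square)
  with True show ?thesis using lborel_pair_negate by simp
next
  case False
  let ?L = "lborel \<Otimes>\<^sub>M lborel :: (real\<times>real) measure"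
  define t where "t = s / (1 + c)"
  let ?S1 = "\<lambda>(x,y). (x - t * y, y::real)" and ?S2 = "\<lambda>(x,y). (x, y + s*x::real)"
  have m1[measurable]: "?S1 \<in> measurable ?L ?L" and m2[measurable]: "?S2 \<in> measurable ?L ?L"
    by measurable
  have S1: "distr ?L ?L ?S1 = ?L"
    using lborel_pair_shear_fst[of "\<lambda>y. - t * y"] by simp
  have S2: "distr ?L ?L ?S2 = ?L"
    using lborel_pair_shear_snd[of "\<lambda>x. s*x"] by (simp add: mult.commute)
  have "distr ?L ?L (?S1 \<circ> ?S2 \<circ> ?S1) = distr (distr (distr ?L ?L ?S1) ?L ?S2) ?L ?S1"
    by (simp only: distr_distr[OF m2 m1] distr_distr[OF m1 measurable_comp[OF m1 m2]] comp_assoc)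
  also have "\<dots> = ?L" by (simp only: S1 S2)
  finally show ?thesis
    using rotation_three_shears[OF cs False] by (simp add: t_def)
qed

definition normal0 :: "real \<Rightarrow> real measure" where
  "normal0 \<sigma> = density lborel (\<lambda>x. ennreal (normal_density 0 \<sigma> x))"

lemma prob_space_normal0: "0 < \<sigma> \<Longrightarrow> prob_space (normal0 \<sigma>)"
  unfolding normal0_def using prob_space_normal_density[of \<sigma> 0] by simp

lemma sets_normal0[simp, measurable_cong]: "sets (normal0 \<sigma>) = sets borel"
  by (simp add: normal0_def)

lemma space_normal0[simp]: "space (normal0 \<sigma>) = UNIV"
  by (simp add: normal0_def)

lemma normal0_pair_density:
  assumes \<sigma>: "0 < \<sigma>"
  shows "normal0 \<sigma> \<Otimes>\<^sub>M normal0 \<sigma>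
    = density (lborel \<Otimes>\<^sub>M lborel) (\<lambda>(x,y). ennreal (normal_density 0 \<sigma> x) * ennreal (normal_density 0 \<sigma> y))"
  unfolding normal0_def
proof (rule pair_measure_density)
  show "sigma_finite_measure (density lborel (\<lambda>x. ennreal (normal_density 0 \<sigma> x)))"
    using prob_space_normal_density[of \<sigma> 0] \<sigma> by (auto intro: prob_space_imp_sigma_finite)
qed (auto intro: lborel.sigma_finite_measure_axioms)

text \<open>The law of a pair of i.i.d. centred normals is invariant under rotations,
  since its density depends only on \<open>x\<^sup>2 + y\<^sup>2\<close>.\<close>
lemma normal0_pair_rotation:
  fixes c s \<sigma> :: real assumes cs: "c^2 + s^2 = 1" and \<sigma>: "0 < \<sigma>"
  shows "distr (normal0 \<sigma> \<Otimes>\<^sub>M normal0 \<sigma>) (lborel \<Otimes>\<^sub>M lborel) (\<lambda>(x,y). (c*x - s*y, s*x + c*y))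
       = normal0 \<sigma> \<Otimes>\<^sub>M normal0 \<sigma>"
proof -
  let ?L = "lborel \<Otimes>\<^sub>M lborel :: (real\<times>real) measure"
  let ?R = "\<lambda>(x,y). (c*x - s*y, s*x + c*y::real)"
  let ?g = "\<lambda>(x,y). ennreal (normal_density 0 \<sigma> x) * ennreal (normal_density 0 \<sigma> y)"
  have NN: "normal0 \<sigma> \<Otimes>\<^sub>M normal0 \<sigma> = density ?L ?g" by (rule normal0_pair_density[OF \<sigma>])
  have invariant: "?g (?R p) = ?g p" for p
  proof -
    obtain x y where p: "p = (x,y)" by (cases p)
    have "(c*x - s*y)^2 + (s*x + c*y)^2 = (c^2+s^2)*(x^2+y^2)"
      by (simp add: power2_eq_square algebra_simps)
    then have sq: "(c*x - s*y)^2 + (s*x + c*y)^2 = x^2 + y^2" using cs by simp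
    have "\<And>a b. normal_density 0 \<sigma> a * normal_density 0 \<sigma> b
        = (1 / sqrt (2 * pi * \<sigma>\<^sup>2))^2 * exp (- (a^2 + b^2) / (2 * \<sigma>\<^sup>2))"
      by (simp add: normal_density_def power2_eq_square mult_exp_exp add_divide_distrib diff_divide_distrib)
    then have "normal_density 0 \<sigma> (c*x - s*y) * normal_density 0 \<sigma> (s*x + c*y)
        = normal_density 0 \<sigma> x * normal_density 0 \<sigma> y" using sq by metis
    then show ?thesis using p by (simp add: ennreal_mult'[symmetric] ennreal_mult[symmetric])
  qed
  have [measurable]: "?R \<in> measurable ?L ?L" by measurable
  have "distr (normal0 \<sigma> \<Otimes>\<^sub>M normal0 \<sigma>) ?L ?R = distr (density ?L (\<lambda>p. ?g (?R p))) ?L ?R"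
    using NN invariant by simp
  also have "\<dots> = density (distr ?L ?L ?R) ?g"
    by (rule density_distr[symmetric]) measurable
  also have "\<dots> = density ?L ?g" using lborel_pair_rotation[OF cs] by simp
  finally show ?thesis using NN by simp
qed

lemma distr_pair_snd_prob:
  assumes "prob_space M" "prob_space N" shows "distr (M \<Otimes>\<^sub>M N) N snd = N"
proof (intro measure_eqI)
  interpret M: prob_space M by fact
  interpret N: prob_space N by fact
  fix A assume A: "A \<in> sets (distr (M \<Otimes>\<^sub>M N) N snd)"
  then have "emeasure (distr (M \<Otimes>\<^sub>M N) N snd) A = emeasure (M \<Otimes>\<^sub>M N) (space M \<times> A)"
    by (auto simp add: emeasure_distr space_pair_measure dest: sets.sets_into_space
        intro!: arg_cong2[where f=emeasure])
  with A show "emeasure (distr (M \<Otimes>\<^sub>M N) N snd) A = emeasure N A"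
    by (simp add: N.emeasure_pair_measure_Times M.emeasure_space_1)
qed simp

lemma (in prob_space) distributed_normal0_iff:
  "distributed M lborel X (normal_density 0 \<sigma>) \<longleftrightarrow> X \<in> borel_measurable M \<and> distr M borel X = normal0 \<sigma>"
proof -
  have "distr M borel X = distr M lborel X" by (rule distr_cong) auto
  then show ?thesis unfolding distributed_def normal0_def by auto
qed

lemma (in prob_space) normal_pair_rotate:
  assumes ind: "indep_var borel P borel Q"
    and P: "distributed M lborel P (normal_density 0 \<sigma>)"
    and Q: "distributed M lborel Q (normal_density 0 \<sigma>)"
    and \<sigma>: "0 < \<sigma>" and cs: "c^2 + s^2 = 1"
  shows "indep_var borel (\<lambda>w. c * P w - s * Q w) borel (\<lambda>w. s * P w + c * Q w)
     \<and> distributed M lborel (\<lambda>w. c * P w - s * Q w) (normal_density 0 \<sigma>)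
     \<and> distributed M lborel (\<lambda>w. s * P w + c * Q w) (normal_density 0 \<sigma>)"
proof -
  interpret N: prob_space "normal0 \<sigma>" by (rule prob_space_normal0[OF \<sigma>])
  let ?N = "normal0 \<sigma>" and ?B = "borel \<Otimes>\<^sub>M borel :: (real \<times> real) measure"
  let ?R = "\<lambda>(x,y). (c*x - s*y, s*x + c*y::real)"
  let ?V = "\<lambda>w. (c * P w - s * Q w, s * P w + c * Q w)"
  have [measurable]: "P \<in> borel_measurable M" "Q \<in> borel_measurable M"
    and DP: "distr M borel P = ?N" and DQ: "distr M borel Q = ?N"
    using P Q by (auto simp: distributed_normal0_iff)
  have joint: "distr M ?B (\<lambda>w. (P w, Q w)) = ?N \<Otimes>\<^sub>M ?N"
    using ind unfolding indep_var_distribution_eq DP DQ by simp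
  have "distr M ?B ?V = distr (distr M ?B (\<lambda>w. (P w, Q w))) ?B ?R"
    by (subst distr_distr) (auto simp: o_def)
  also have "\<dots> = distr (?N \<Otimes>\<^sub>M ?N) (lborel \<Otimes>\<^sub>M lborel) ?R"
    unfolding joint by (rule distr_cong) auto
  also have "\<dots> = ?N \<Otimes>\<^sub>M ?N"
    by (rule normal0_pair_rotation[OF cs \<sigma>])
  finally have joint': "distr M ?B ?V = ?N \<Otimes>\<^sub>M ?N" .
  have "distr M borel (\<lambda>w. c * P w - s * Q w) = distr (distr M ?B ?V) ?N fst"
    by (subst distr_distr) (auto simp: o_def intro!: distr_cong)
  also have "\<dots> = ?N" unfolding joint' by (rule N.distr_pair_fst)
  finally have D1: "distr M borel (\<lambda>w. c * P w - s * Q w) = ?N" .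
  have "distr M borel (\<lambda>w. s * P w + c * Q w) = distr (distr M ?B ?V) ?N snd"
    by (subst distr_distr) (auto simp: o_def intro!: distr_cong)
  also have "\<dots> = ?N" unfolding joint'
    by (rule distr_pair_snd_prob[OF N.prob_space_axioms N.prob_space_axioms])
  finally have D2: "distr M borel (\<lambda>w. s * P w + c * Q w) = ?N" .
  show ?thesis
    unfolding indep_var_distribution_eq distributed_normal0_iff D1 D2 joint' by simp
qed

text \<open>A circularly symmetric complex Gaussian \<open>CN(0,2\<sigma>\<^sup>2)\<close>: real and imaginary part
  independent, each \<open>N(0,\<sigma>\<^sup>2)\<close>.\<close>
definition (in prob_space) circ_gauss :: "real \<Rightarrow> ('a \<Rightarrow> complex) \<Rightarrow> bool" where
  "circ_gauss \<sigma> V \<longleftrightarrow> indep_var borel (\<lambda>w. Re (V w)) borel (\<lambda>w. Im (V w))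
     \<and> distributed M lborel (\<lambda>w. Re (V w)) (normal_density 0 \<sigma>)
     \<and> distributed M lborel (\<lambda>w. Im (V w)) (normal_density 0 \<sigma>)"

lemma borel_measurable_Complex[measurable (raw)]:
  "f \<in> borel_measurable M \<Longrightarrow> g \<in> borel_measurable M \<Longrightarrow> (\<lambda>x. Complex (f x) (g x)) \<in> borel_measurable M"
  by (simp add: borel_measurable_complex_iff)

lemma (in prob_space) circ_gauss_measurable:
  assumes "circ_gauss \<sigma> V" shows "V \<in> borel_measurable M"
proof -
  have "(\<lambda>w. Re (V w)) \<in> borel_measurable M" "(\<lambda>w. Im (V w)) \<in> borel_measurable M"
    using assms unfolding circ_gauss_def distributed_def by auto
  then show ?thesis by (simp add: borel_measurable_complex_iff)
qed

text \<open>Multiplying by \<open>c \<noteq> 0\<close> rotates by \<open>arg c\<close> and scales by \<open>|c|\<close>.\<close>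
lemma (in prob_space) circ_gauss_scale:
  assumes V: "circ_gauss \<sigma> V" and \<sigma>: "0 < \<sigma>" and c: "c \<noteq> 0"
  shows "circ_gauss (cmod c * \<sigma>) (\<lambda>w. c * V w)"
proof -
  let ?P = "\<lambda>w. Re (V w)" and ?Q = "\<lambda>w. Im (V w)"
  define a b where "a = Re c / cmod c" and "b = Im c / cmod c"
  have cpos: "0 < cmod c" using c by simp
  have "a^2 + b^2 = (Re c ^ 2 + Im c ^ 2) / (cmod c)^2"
    by (simp add: a_def b_def power_divide add_divide_distrib)
  then have ab: "a^2 + b^2 = 1" using cpos by (simp add: cmod_power2[symmetric])
  have R: "indep_var borel (\<lambda>w. a * ?P w - b * ?Q w) borel (\<lambda>w. b * ?P w + a * ?Q w)
     \<and> distributed M lborel (\<lambda>w. a * ?P w - b * ?Q w) (normal_density 0 \<sigma>)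
     \<and> distributed M lborel (\<lambda>w. b * ?P w + a * ?Q w) (normal_density 0 \<sigma>)"
    using V \<sigma> ab unfolding circ_gauss_def by (intro normal_pair_rotate) auto
  have re: "Re (c * V w) = 0 + cmod c * (a * ?P w - b * ?Q w)"
    and im: "Im (c * V w) = 0 + cmod c * (b * ?P w + a * ?Q w)" for w
    using cpos by (simp_all add: a_def b_def field_simps)
  have "distributed M lborel (\<lambda>w. 0 + cmod c * (a * ?P w - b * ?Q w)) (normal_density (0 + cmod c * 0) (\<bar>cmod c\<bar> * \<sigma>))"
    "distributed M lborel (\<lambda>w. 0 + cmod c * (b * ?P w + a * ?Q w)) (normal_density (0 + cmod c * 0) (\<bar>cmod c\<bar> * \<sigma>))"
    using R \<sigma> cpos by (intro normal_density_affine; auto)+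
  moreover have "indep_var borel ((\<lambda>x. 0 + cmod c * x) \<circ> (\<lambda>w. a * ?P w - b * ?Q w))
      borel ((\<lambda>x. 0 + cmod c * x) \<circ> (\<lambda>w. b * ?P w + a * ?Q w))"
    using R by (intro indep_var_compose) auto
  ultimately show ?thesis unfolding circ_gauss_def re im by (simp add: o_def)
qed

lemma (in prob_space) indep_re_im_pair:
  fixes V1 V2 :: "'a \<Rightarrow> complex"
  assumes ind: "indep_var borel V1 borel V2"
    and i1: "indep_var borel (\<lambda>w. Re (V1 w)) borel (\<lambda>w. Im (V1 w))"
    and i2: "indep_var borel (\<lambda>w. Re (V2 w)) borel (\<lambda>w. Im (V2 w))"
  shows "indep_vars (\<lambda>_. borel) (\<lambda>i w. if i = 0 then Re (V1 w) else if i = 1 then Im (V1 w)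
           else if i = 2 then Re (V2 w) else Im (V2 w)) {0..<4::nat}"
proof -
  let ?W = "\<lambda>i w. if i = 0 then Re (V1 w) else if i = 1 then Im (V1 w) else if i = 2 then Re (V2 w) else Im (V2 w)"
  have [measurable]: "V1 \<in> borel_measurable M" "V2 \<in> borel_measurable M"
    using ind by (auto dest: indep_var_rv1 indep_var_rv2)
  have rv: "random_variable borel (?W i)" for i by measurable
  have eq4: "{0..<4::nat} = {0,1,2,3}" by auto
  have "prob (\<Inter>j\<in>{0..<4}. ?W j -` A j \<inter> space M) = (\<Prod>j\<in>{0..<4}. prob (?W j -` A j \<inter> space M))"
    if A: "A \<in> (\<Pi> i\<in>{0..<4::nat}. sets borel)" for A
  proof -
    from A have A0[measurable]: "A 0 \<in> sets borel" and A1[measurable]: "A 1 \<in> sets borel"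
      and A2[measurable]: "A 2 \<in> sets borel" and A3[measurable]: "A 3 \<in> sets borel" by auto
    define C1 C2 where "C1 = {z. Re z \<in> A 0 \<and> Im z \<in> A 1}" and "C2 = {z. Re z \<in> A 2 \<and> Im z \<in> A 3}"
    have [measurable]: "C1 \<in> sets borel" "C2 \<in> sets borel" unfolding C1_def C2_def by measurable
    have "V1 -` C1 \<inter> space M = (\<lambda>x. (Re (V1 x), Im (V1 x))) -` (A 0 \<times> A 1) \<inter> space M"
      and "V2 -` C2 \<inter> space M = (\<lambda>x. (Re (V2 x), Im (V2 x))) -` (A 2 \<times> A 3) \<inter> space M"
      unfolding C1_def C2_def by auto
    then have P1: "prob (V1 -` C1 \<inter> space M) = prob ((\<lambda>w. Re (V1 w)) -` A 0 \<inter> space M) * prob ((\<lambda>w. Im (V1 w)) -` A 1 \<inter> space M)"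
      and P2: "prob (V2 -` C2 \<inter> space M) = prob ((\<lambda>w. Re (V2 w)) -` A 2 \<inter> space M) * prob ((\<lambda>w. Im (V2 w)) -` A 3 \<inter> space M)"
      using indep_varD[OF i1 A0 A1] indep_varD[OF i2 A2 A3] by simp_all
    have "(\<Inter>j\<in>{0..<4}. ?W j -` A j \<inter> space M) = (\<lambda>x. (V1 x, V2 x)) -` (C1 \<times> C2) \<inter> space M"
      unfolding eq4 C1_def C2_def by auto
    then have "prob (\<Inter>j\<in>{0..<4}. ?W j -` A j \<inter> space M) = prob (V1 -` C1 \<inter> space M) * prob (V2 -` C2 \<inter> space M)"
      using indep_varD[OF ind] by simp
    then show ?thesis unfolding P1 P2 eq4 by (simp add: mult.assoc)
  qed
  then show ?thesis
    by (subst indep_vars_finite[where E="\<lambda>_. sets borel"])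
       (auto simp: rv Int_stable_def sets.sigma_sets_eq[of borel, simplified])
qed

lemma (in prob_space) circ_gauss_add:
  assumes V1: "circ_gauss \<sigma>1 V1" and V2: "circ_gauss \<sigma>2 V2" and ind: "indep_var borel V1 borel V2"
    and \<sigma>1: "0 < \<sigma>1" and \<sigma>2: "0 < \<sigma>2"
  shows "circ_gauss (sqrt (\<sigma>1^2 + \<sigma>2^2)) (\<lambda>w. V1 w + V2 w)"
proof -
  let ?W = "\<lambda>i w. if i = 0 then Re (V1 w) else if i = 1 then Im (V1 w) else if i = 2 then Re (V2 w) else Im (V2 w)"
  have "indep_vars (\<lambda>_. borel) ?W {0..<4::nat}"
    using V1 V2 ind unfolding circ_gauss_def by (intro indep_re_im_pair) auto
  then have "indep_var (PiM {0,2::nat} (\<lambda>_. borel)) (\<lambda>\<omega>. restrict (\<lambda>i. ?W i \<omega>) {0,2::nat})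
      (PiM {1,3::nat} (\<lambda>_. borel)) (\<lambda>\<omega>. restrict (\<lambda>i. ?W i \<omega>) {1,3::nat})"
    by (rule indep_var_restrict) auto
  then have "indep_var borel ((\<lambda>f::nat\<Rightarrow>real. f 0 + f 2) \<circ> (\<lambda>\<omega>. restrict (\<lambda>i. ?W i \<omega>) {0,2}))
      borel ((\<lambda>f::nat\<Rightarrow>real. f 1 + f 3) \<circ> (\<lambda>\<omega>. restrict (\<lambda>i. ?W i \<omega>) {1,3}))"
    by (rule indep_var_compose) auto
  then have "indep_var borel (\<lambda>w. Re (V1 w + V2 w)) borel (\<lambda>w. Im (V1 w + V2 w))"
    by (simp add: o_def)
  moreover have "indep_var borel (Re \<circ> V1) borel (Re \<circ> V2)" "indep_var borel (Im \<circ> V1) borel (Im \<circ> V2)"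
    using ind by (auto intro: indep_var_compose)
  then have "distributed M lborel (\<lambda>w. Re (V1 w) + Re (V2 w)) (normal_density (0 + 0) (sqrt (\<sigma>1^2 + \<sigma>2^2)))"
    "distributed M lborel (\<lambda>w. Im (V1 w) + Im (V2 w)) (normal_density (0 + 0) (sqrt (\<sigma>1^2 + \<sigma>2^2)))"
    using V1 V2 \<sigma>1 \<sigma>2 unfolding circ_gauss_def by (intro add_indep_normal; auto simp: o_def)+
  ultimately show ?thesis unfolding circ_gauss_def by simp
qed

lemma (in prob_space) indep_var_term_lincomb:
  fixes Z :: "'i \<Rightarrow> 'a \<Rightarrow> complex"
  assumes ind: "indep_vars (\<lambda>_. borel) Z S" and sub: "insert i T \<subseteq> S" and i: "i \<notin> T"
  shows "indep_var borel (\<lambda>w. c i * Z i w) borel (\<lambda>w. \<Sum>j\<in>T. c j * Z j w)"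
proof -
  have "indep_var (PiM {i} (\<lambda>_. borel)) (\<lambda>\<omega>. restrict (\<lambda>i. Z i \<omega>) {i})
      (PiM T (\<lambda>_. borel)) (\<lambda>\<omega>. restrict (\<lambda>i. Z i \<omega>) T)"
    using sub i by (intro indep_var_restrict[OF ind]) auto
  then have "indep_var borel ((\<lambda>f. c i * f i) \<circ> (\<lambda>\<omega>. restrict (\<lambda>i. Z i \<omega>) {i}))
      borel ((\<lambda>f. \<Sum>j\<in>T. c j * f j) \<circ> (\<lambda>\<omega>. restrict (\<lambda>i. Z i \<omega>) T))"
    by (rule indep_var_compose) auto
  then show ?thesis by (simp add: o_def cong: sum.cong)
qed

lemma (in prob_space) circ_gauss_lincomb_nonzero:
  fixes Z :: "'i \<Rightarrow> 'a \<Rightarrow> complex" and c :: "'i \<Rightarrow> complex"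
  assumes ind: "indep_vars (\<lambda>_. borel) Z S" and g: "\<And>i. i \<in> S \<Longrightarrow> circ_gauss s (Z i)" and s: "0 < s"
    and T: "finite T" "T \<noteq> {}" "T \<subseteq> S" and nz: "\<And>i. i \<in> T \<Longrightarrow> c i \<noteq> 0"
  shows "circ_gauss (s * sqrt (\<Sum>i\<in>T. (cmod (c i))^2)) (\<lambda>w. \<Sum>i\<in>T. c i * Z i w)"
  using T nz
proof (induct T rule: finite_ne_induct)
  case (singleton i)
  then have "circ_gauss (cmod (c i) * s) (\<lambda>w. c i * Z i w)" using g s by (intro circ_gauss_scale) auto
  then show ?case by (simp add: mult.commute)
next
  case (insert i T)
  let ?v = "\<Sum>i\<in>T. (cmod (c i))^2"
  have pos: "0 < ?v" using insert by (intro sum_pos) auto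
  have "circ_gauss (sqrt ((cmod (c i) * s)^2 + (s * sqrt ?v)^2)) (\<lambda>w. c i * Z i w + (\<Sum>j\<in>T. c j * Z j w))"
  proof (rule circ_gauss_add)
    show "circ_gauss (cmod (c i) * s) (\<lambda>w. c i * Z i w)" using g s insert by (intro circ_gauss_scale) auto
    show "indep_var borel (\<lambda>w. c i * Z i w) borel (\<lambda>w. \<Sum>j\<in>T. c j * Z j w)"
      using insert by (intro indep_var_term_lincomb[OF ind]) auto
  qed (use insert s pos in auto)
  moreover have "(cmod (c i) * s)^2 + (s * sqrt ?v)^2 = s^2 * (\<Sum>i\<in>insert i T. (cmod (c i))^2)"
    using insert pos by (simp add: power_mult_distrib algebra_simps)
  ultimately show ?case using insert s by (simp add: real_sqrt_mult)
qed

lemma (in prob_space) circ_gauss_lincomb: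
  fixes Z :: "'i \<Rightarrow> 'a \<Rightarrow> complex" and c :: "'i \<Rightarrow> complex"
  assumes fin: "finite S" and ind: "indep_vars (\<lambda>_. borel) Z S"
    and g: "\<And>i. i \<in> S \<Longrightarrow> circ_gauss s (Z i)" and s: "0 < s" and nz: "\<exists>i\<in>S. c i \<noteq> 0"
  shows "circ_gauss (s * sqrt (\<Sum>i\<in>S. (cmod (c i))^2)) (\<lambda>w. \<Sum>i\<in>S. c i * Z i w)"
proof -
  define T where "T = {i\<in>S. c i \<noteq> 0}"
  have "(\<Sum>i\<in>S. (cmod (c i))^2) = (\<Sum>i\<in>T. (cmod (c i))^2)"
    unfolding T_def by (rule sum.mono_neutral_right) (auto simp: fin)
  moreover have "(\<lambda>w. \<Sum>i\<in>S. c i * Z i w) = (\<lambda>w. \<Sum>i\<in>T. c i * Z i w)"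
    unfolding T_def by (rule ext, rule sum.mono_neutral_right) (auto simp: fin)
  moreover have "circ_gauss (s * sqrt (\<Sum>i\<in>T. (cmod (c i))^2)) (\<lambda>w. \<Sum>i\<in>T. c i * Z i w)"
    using fin nz by (intro circ_gauss_lincomb_nonzero[OF ind g s]) (auto simp: T_def)
  ultimately show ?thesis by simp
qed

lemma nn_integral_gauss_tail_FTC:
  fixes b c :: real assumes b: "0 \<le> b" and c: "0 < c"
  shows "(\<integral>\<^sup>+x. ennreal (x * exp (- (x^2 * c))) * indicator {b..} x \<partial>lborel) = ennreal (exp (- (b^2 * c)) / (2 * c))"
proof -
  have "filterlim (\<lambda>x::real. x^2 * c) at_top at_top"
    by (rule filterlim_at_top_mult_tendsto_pos[OF tendsto_const c]) (auto intro: filterlim_pow_at_top filterlim_ident)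
  then have exp_lim: "((\<lambda>x. exp (- (x^2 * c))) \<longlongrightarrow> 0) at_top"
    by (intro filterlim_compose[OF exp_at_bot] filterlim_compose[OF filterlim_uminus_at_bot_at_top])
  have lim: "((\<lambda>x. - exp (- (x^2 * c)) / (2 * c)) \<longlongrightarrow> 0) at_top"
    using tendsto_divide[OF tendsto_minus[OF exp_lim] tendsto_const, of "2 * c"] c by simp
  have "(\<integral>\<^sup>+x. ennreal (x * exp (- (x^2 * c))) * indicator {b..} x \<partial>lborel)
      = ennreal (0 - (- exp (- (b^2 * c)) / (2 * c)))"
  proof (rule nn_integral_FTC_atLeast[OF _ _ _ lim])
    fix x :: real assume "b \<le> x"
    then show "0 \<le> x * exp (- (x^2 * c))" using b by simp
    show "((\<lambda>x. - exp (- (x^2 * c)) / (2 * c)) has_real_derivative x * exp (- (x^2 * c))) (at x)"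
      using c by (auto intro!: derivative_eq_intros simp: field_simps)
  qed measurable
  then show ?thesis by simp
qed

text \<open>Radial tail integral over the half line: with \<open>b = \<surd>(a/c)\<close> the constraint
  \<open>a < c x\<^sup>2, x > 0\<close> becomes \<open>x > b\<close>.\<close>
lemma nn_integral_radial_tail:
  fixes a c :: real assumes a: "0 \<le> a" and c: "0 < c"
  shows "(\<integral>\<^sup>+x. ennreal (x * exp (- (x^2 * c))) * indicator {a<..} (x^2 * c) * indicator {0<..} x \<partial>lborel)
       = ennreal (exp (- a) / (2 * c))"
proof -
  define b where "b = sqrt (a / c)"
  have b0: "0 \<le> b" and bb: "b^2 * c = a" using a c by (simp_all add: b_def)
  have key: "(a < x^2 * c) = (b < x)" if x: "0 < x" for x
  proof -
    have "(a < x^2 * c) = (a / c < x^2)" using c by (simp add: field_simps)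
    also have "\<dots> = (sqrt (a/c) < sqrt (x^2))" by (simp only: real_sqrt_less_iff)
    finally show ?thesis using x by (simp add: b_def)
  qed
  have "AE x in lborel. x \<notin> {0, b}" by (rule AE_I[where N="{0,b}"]) (auto simp: emeasure_lborel_countable)
  then have "AE x in lborel. ennreal (x * exp (- (x^2 * c))) * indicator {a<..} (x^2 * c) * indicator {0<..} x
        = ennreal (x * exp (- (x^2 * c))) * indicator {b..} x"
  proof (rule AE_mp, intro AE_I2 impI)
    fix x :: real assume x: "x \<notin> {0, b}"
    show "ennreal (x * exp (- (x^2 * c))) * indicator {a<..} (x^2 * c) * indicator {0<..} x
        = ennreal (x * exp (- (x^2 * c))) * indicator {b..} x"
    proof (cases "0 < x")
      case True
      then show ?thesis using key[OF True] x by (auto split: split_indicator)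
    next
      case False
      then have "\<not> b \<le> x" using x b0 by auto
      then show ?thesis using False by (auto split: split_indicator)
    qed
  qed
  then have "(\<integral>\<^sup>+x. ennreal (x * exp (- (x^2 * c))) * indicator {a<..} (x^2 * c) * indicator {0<..} x \<partial>lborel)
      = (\<integral>\<^sup>+x. ennreal (x * exp (- (x^2 * c))) * indicator {b..} x \<partial>lborel)"
    by (rule nn_integral_cong_AE)
  also have "\<dots> = ennreal (exp (- a) / (2 * c))"
    using nn_integral_gauss_tail_FTC[OF b0 c] bb by simp
  finally show ?thesis .
qed

text \<open>Substituting \<open>y = x s\<close> in the inner integral over the first quadrant.\<close>
lemma nn_integral_quadrant_slice:
  fixes a x :: real
  shows "(\<integral>\<^sup>+y. ennreal (exp (- (x^2 + y^2))) * indicator {a<..} (x^2 + y^2) * indicator {0<..} y * indicator {0<..} x \<partial>lborel)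
    = (\<integral>\<^sup>+s. ennreal (x * exp (- (x^2 * (1 + s^2)))) * indicator {a<..} (x^2 * (1 + s^2)) * indicator {0<..} x * indicator {0<..} s \<partial>lborel)"
proof (cases "0 < x")
  case True
  have sq: "x^2 + (0 + x * s)^2 = x^2 * (1 + s^2)" for s by (simp add: power_mult_distrib algebra_simps)
  have pos: "indicator {0<..} (0 + x * s) = (indicator {0<..} s :: ennreal)" for s
    using True by (simp add: indicator_def zero_less_mult_iff)
  have "(\<integral>\<^sup>+y. ennreal (exp (- (x^2 + y^2))) * indicator {a<..} (x^2 + y^2) * indicator {0<..} y * indicator {0<..} x \<partial>lborel)
    = ennreal \<bar>x\<bar> * (\<integral>\<^sup>+s. ennreal (exp (- (x^2 + (0 + x * s)^2))) * indicator {a<..} (x^2 + (0 + x * s)^2)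
        * indicator {0<..} (0 + x * s) * indicator {0<..} x \<partial>lborel)"
    using True by (intro nn_integral_real_affine) auto
  also have "\<dots> = (\<integral>\<^sup>+s. ennreal x * (ennreal (exp (- (x^2 * (1 + s^2)))) * indicator {a<..} (x^2 * (1 + s^2))
        * indicator {0<..} x * indicator {0<..} s) \<partial>lborel)"
    unfolding sq pos using True by (subst nn_integral_cmult[symmetric]) (auto simp: mult_ac)
  also have "\<dots> = (\<integral>\<^sup>+s. ennreal (x * exp (- (x^2 * (1 + s^2)))) * indicator {a<..} (x^2 * (1 + s^2))
        * indicator {0<..} x * indicator {0<..} s \<partial>lborel)"
    using True by (intro nn_integral_cong) (simp add: ennreal_mult mult_ac)
  finally show ?thesis .
qed (simp add: indicator_def)

text \<open>The Gaussian integral over the part of the open first quadrant outside the disc of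
  radius \<open>\<surd>a\<close> is \<open>\<pi> e\<^sup>-\<^sup>a / 4\<close>: substitute \<open>y = x s\<close>, swap the integrals, and use
  \<open>\<integral>\<^sub>0\<^sup>\<infinity> ds/(1+s\<^sup>2) = \<pi>/2\<close>.\<close>
lemma nn_integral_gauss_quadrant_tail:
  fixes a :: real assumes a: "0 \<le> a"
  shows "(\<integral>\<^sup>+x. \<integral>\<^sup>+y. ennreal (exp (- (x^2 + y^2))) * indicator {a<..} (x^2 + y^2) * indicator {0<..} y * indicator {0<..} x \<partial>lborel \<partial>lborel)
       = ennreal (pi / 4 * exp (- a))"
proof -
  let ?G = "\<lambda>x s::real. ennreal (x * exp (- (x^2 * (1 + s^2)))) * indicator {a<..} (x^2 * (1 + s^2)) * indicator {0<..} x * indicator {0<..} s"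
  have "(\<integral>\<^sup>+x. \<integral>\<^sup>+y. ennreal (exp (- (x^2 + y^2))) * indicator {a<..} (x^2 + y^2) * indicator {0<..} y * indicator {0<..} x \<partial>lborel \<partial>lborel)
      = (\<integral>\<^sup>+x. \<integral>\<^sup>+s. ?G x s \<partial>lborel \<partial>lborel)"
    by (simp only: nn_integral_quadrant_slice)
  also have "\<dots> = (\<integral>\<^sup>+s. \<integral>\<^sup>+x. ?G x s \<partial>lborel \<partial>lborel)"
    by (rule lborel_pair.Fubini'[symmetric]) auto
  also have "\<dots> = (\<integral>\<^sup>+s. ennreal (exp (- a) / (2 * (1 + s^2))) * indicator {0<..} s \<partial>lborel)"
  proof (rule nn_integral_cong)
    fix s :: real
    have "(\<integral>\<^sup>+x. ?G x s \<partial>lborel) = (\<integral>\<^sup>+x. ennreal (x * exp (- (x^2 * (1 + s^2)))) * indicator {a<..} (x^2 * (1 + s^2))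
        * indicator {0<..} x \<partial>lborel) * indicator {0<..} s"
      by (rule nn_integral_multc) auto
    then show "(\<integral>\<^sup>+x. ?G x s \<partial>lborel) = ennreal (exp (- a) / (2 * (1 + s^2))) * indicator {0<..} s"
      using a by (simp add: nn_integral_radial_tail add_pos_nonneg)
  qed
  also have "\<dots> = (\<integral>\<^sup>+s. ennreal (exp (- a) / (2 * (1 + s^2))) * indicator {0..} s \<partial>lborel)"
    by (intro nn_integral_cong_AE AE_I[where N="{0}"]) (auto split: split_indicator)
  also have "\<dots> = ennreal (exp (- a) * (pi / 2) / 2 - exp (- a) * arctan 0 / 2)"
  proof (rule nn_integral_FTC_atLeast)
    show "((\<lambda>s. exp (- a) * arctan s / 2) \<longlongrightarrow> exp (- a) * (pi / 2) / 2) at_top"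
      by (intro tendsto_intros) (simp_all add: tendsto_arctan_at_top)
  qed (auto intro!: derivative_eq_intros simp: add_nonneg_eq_0_iff field_simps power2_eq_square)
  also have "\<dots> = ennreal (pi / 4 * exp (- a))" by simp
  finally show ?thesis .
qed

lemma nn_integral_even:
  fixes g :: "real \<Rightarrow> ennreal"
  assumes g[measurable]: "g \<in> borel_measurable borel" and even: "\<And>x. g (- x) = g x"
  shows "(\<integral>\<^sup>+x. g x \<partial>lborel) = 2 * (\<integral>\<^sup>+x. g x * indicator {0<..} x \<partial>lborel)"
proof -
  have "(\<integral>\<^sup>+x. g x \<partial>lborel) = (\<integral>\<^sup>+x. g x * indicator {0<..} x + g x * indicator {..<0} x \<partial>lborel)"
    by (intro nn_integral_cong_AE AE_I[where N="{0}"]) (auto split: split_indicator)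
  also have "\<dots> = (\<integral>\<^sup>+x. g x * indicator {0<..} x \<partial>lborel) + (\<integral>\<^sup>+x. g x * indicator {..<0} x \<partial>lborel)"
    by (rule nn_integral_add) auto
  also have "(\<integral>\<^sup>+x. g x * indicator {..<0} x \<partial>lborel)
      = ennreal \<bar>-1\<bar> * (\<integral>\<^sup>+x. g (0 + -1 * x) * indicator {..<0} (0 + -1 * x) \<partial>lborel)"
    by (rule nn_integral_real_affine) auto
  also have "\<dots> = (\<integral>\<^sup>+x. g x * indicator {0<..} x \<partial>lborel)"
    using even by (simp add: indicator_def)
  finally show ?thesis by (simp add: mult_2)
qed

text \<open>The integral of \<open>exp(-(x^2+y^2))\<close> over \<open>x^2 + y^2 > a\<close> is \<open>\<pi> exp(-a)\<close>: by symmetry it is four times the integral over the first quadrant.\<close>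
lemma nn_integral_gauss_plane_tail:
  fixes a :: real assumes a: "0 \<le> a"
  shows "(\<integral>\<^sup>+x. \<integral>\<^sup>+y. ennreal (exp (- (x^2 + y^2))) * indicator {a<..} (x^2 + y^2) \<partial>lborel \<partial>lborel)
       = ennreal (pi * exp (- a))"
proof -
  let ?h = "\<lambda>x y::real. ennreal (exp (- (x^2 + y^2))) * indicator {a<..} (x^2 + y^2)"
  let ?q = "\<lambda>x y::real. ?h x y * indicator {0<..} y * indicator {0<..} x"
  have inner: "(\<integral>\<^sup>+y. ?h x y \<partial>lborel) * indicator {0<..} x = 2 * (\<integral>\<^sup>+y. ?q x y \<partial>lborel)" for x
  proof -
    have "(\<integral>\<^sup>+y. ?q x y \<partial>lborel) = (\<integral>\<^sup>+y. ?h x y * indicator {0<..} y \<partial>lborel) * indicator {0<..} x"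
      by (rule nn_integral_multc) measurable
    moreover have "(\<integral>\<^sup>+y. ?h x y \<partial>lborel) = 2 * (\<integral>\<^sup>+y. ?h x y * indicator {0<..} y \<partial>lborel)"
      by (rule nn_integral_even) (simp_all add: power2_eq_square)
    ultimately show ?thesis by (simp add: mult.assoc)
  qed
  have "(\<integral>\<^sup>+x. \<integral>\<^sup>+y. ?h x y \<partial>lborel \<partial>lborel) = 2 * (\<integral>\<^sup>+x. (\<integral>\<^sup>+y. ?h x y \<partial>lborel) * indicator {0<..} x \<partial>lborel)"
    by (rule nn_integral_even) (simp_all add: power2_eq_square)
  also have "\<dots> = 2 * (\<integral>\<^sup>+x. 2 * (\<integral>\<^sup>+y. ?q x y \<partial>lborel) \<partial>lborel)"
    by (simp only: inner)
  also have "\<dots> = 4 * (\<integral>\<^sup>+x. \<integral>\<^sup>+y. ?q x y \<partial>lborel \<partial>lborel)"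
    by (subst nn_integral_cmult) (simp_all add: mult.assoc[symmetric])
  also have "\<dots> = 4 * ennreal (pi / 4 * exp (- a))"
    by (simp only: nn_integral_gauss_quadrant_tail[OF a])
  also have "\<dots> = ennreal (pi * exp (- a))"
    by (simp add: ennreal_mult'[symmetric] ennreal_numeral[symmetric] del: ennreal_numeral)
  finally show ?thesis .
qed

lemma normal_density_half: "normal_density 0 (1 / sqrt 2) x = exp (- (x^2)) / sqrt pi"
proof -
  have h: "(1 / sqrt 2)^2 = (1/2::real)" by (simp add: power_divide)
  show ?thesis unfolding normal_density_def h by simp
qed

lemma sets_disk_complement[measurable]:
  "{p::real\<times>real. a < fst p ^ 2 + snd p ^ 2} \<in> sets (borel \<Otimes>\<^sub>M borel)"
proof -
  have "{p::real\<times>real. a < fst p ^ 2 + snd p ^ 2} = (\<lambda>p. fst p ^ 2 + snd p ^ 2) -` {a<..} \<inter> space (borel \<Otimes>\<^sub>M borel)"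
    by (auto simp: space_pair_measure)
  also have "\<dots> \<in> sets (borel \<Otimes>\<^sub>M borel)" by (rule measurable_sets) measurable
  finally show ?thesis .
qed

text \<open>For two i.i.d. \<open>N(0,1/2)\<close> coordinates, \<open>P(x^2 + y^2 > a) = exp(-a)\<close>: the joint
  density is \<open>exp(-(x^2+y^2)) / \<pi>\<close>.\<close>
lemma normal0_pair_disk_complement:
  fixes a :: real assumes a: "0 \<le> a"
  shows "emeasure (normal0 (1 / sqrt 2) \<Otimes>\<^sub>M normal0 (1 / sqrt 2)) {p. a < fst p ^ 2 + snd p ^ 2}
    = ennreal (exp (- a))"
proof -
  let ?S = "{p::real\<times>real. a < fst p ^ 2 + snd p ^ 2}"
  let ?g = "\<lambda>(x,y). ennreal (normal_density 0 (1 / sqrt 2) x) * ennreal (normal_density 0 (1 / sqrt 2) y)"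
  let ?h = "\<lambda>x y::real. ennreal (exp (- (x^2 + y^2))) * indicator {a<..} (x^2 + y^2)"
  have S: "?S \<in> sets (lborel \<Otimes>\<^sub>M lborel)" using sets_disk_complement by simp
  have g: "?g (x, y) * indicator ?S (x, y) = ennreal (1 / pi) * ?h x y" for x y
  proof -
    have "normal_density 0 (1 / sqrt 2) x * normal_density 0 (1 / sqrt 2) y = 1 / pi * exp (- (x^2 + y^2))"
      by (simp add: normal_density_half mult_exp_exp)
    then show ?thesis by (simp add: ennreal_mult[symmetric] indicator_def)
  qed
  have "emeasure (normal0 (1 / sqrt 2) \<Otimes>\<^sub>M normal0 (1 / sqrt 2)) ?S
      = (\<integral>\<^sup>+p. ?g p * indicator ?S p \<partial>(lborel \<Otimes>\<^sub>M lborel))"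
    unfolding normal0_pair_density[of "1 / sqrt 2", simplified] using S by (simp add: emeasure_density)
  also have "\<dots> = (\<integral>\<^sup>+x. \<integral>\<^sup>+y. ?g (x, y) * indicator ?S (x, y) \<partial>lborel \<partial>lborel)"
    by (rule lborel.nn_integral_fst[symmetric]) (use S in measurable)
  also have "\<dots> = ennreal (1 / pi) * (\<integral>\<^sup>+x. \<integral>\<^sup>+y. ?h x y \<partial>lborel \<partial>lborel)"
    unfolding g by (subst nn_integral_cmult[symmetric], measurable)+
  also have "\<dots> = ennreal (exp (- a))"
    by (simp only: nn_integral_gauss_plane_tail[OF a]) (simp add: ennreal_mult[symmetric])
  finally show ?thesis .
qed

lemma (in prob_space) circ_gauss_norm_sq_exponential:
  assumes V: "circ_gauss (1 / sqrt 2) V"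
  shows "distributed M lborel (\<lambda>w. (cmod (V w))^2) (exponential_density 1)"
proof (rule exponential_distributedI)
  let ?N = "normal0 (1 / sqrt 2)"
  have [measurable]: "V \<in> borel_measurable M" by (rule circ_gauss_measurable[OF V])
  show "(\<lambda>w. (cmod (V w))^2) \<in> borel_measurable M" by measurable
  fix a :: real assume a: "0 \<le> a"
  have DP: "distr M borel (\<lambda>w. Re (V w)) = ?N" and DQ: "distr M borel (\<lambda>w. Im (V w)) = ?N"
    using V unfolding circ_gauss_def by (auto simp: distributed_normal0_iff)
  have joint: "distr M (borel \<Otimes>\<^sub>M borel) (\<lambda>w. (Re (V w), Im (V w))) = ?N \<Otimes>\<^sub>M ?N"
    using V unfolding circ_gauss_def indep_var_distribution_eq DP DQ by simp
  let ?S = "{p::real\<times>real. a < fst p ^ 2 + snd p ^ 2}"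
  have "emeasure M {w \<in> space M. a < (cmod (V w))^2} = emeasure M ((\<lambda>w. (Re (V w), Im (V w))) -` ?S \<inter> space M)"
    by (rule arg_cong[where f="emeasure M"]) (auto simp: cmod_power2)
  also have "\<dots> = emeasure (distr M (borel \<Otimes>\<^sub>M borel) (\<lambda>w. (Re (V w), Im (V w)))) ?S"
    by (rule emeasure_distr[symmetric]) auto
  also have "\<dots> = emeasure (?N \<Otimes>\<^sub>M ?N) ?S" by (simp only: joint)
  also have "\<dots> = ennreal (exp (- a))" by (rule normal0_pair_disk_complement[OF a])
  finally have "prob {w \<in> space M. a < (cmod (V w))^2} = exp (- a)"
    by (simp add: emeasure_eq_measure)
  moreover have "{w \<in> space M. (cmod (V w))^2 \<le> a} = space M - {w \<in> space M. a < (cmod (V w))^2}" by auto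
  ultimately have "prob {w \<in> space M. (cmod (V w))^2 \<le> a} = 1 - exp (- a)"
    by (simp add: prob_compl)
  then show "emeasure M {w \<in> space M. (cmod (V w))^2 \<le> a} = 1 - ennreal (exp (- a * 1))"
    by (simp add: emeasure_eq_measure ennreal_minus ennreal_1[symmetric] del: ennreal_1)
qed simp

locale rayleigh_channel = prob_space M for M :: "'a measure" +
  fixes Nt Nr k :: nat and h :: "'a \<Rightarrow> nat \<Rightarrow> nat \<Rightarrow> complex"
  assumes Nt: "2 \<le> Nt" and Nr: "1 \<le> Nr" and k: "k < Nt"
    and iid: "iid_CN01_entries M Nt Nr h"
begin

definition coords :: "(nat \<times> nat \<times> bool) set" where
  "coords = {..<Nt} \<times> {..<Nr} \<times> UNIV"

definition coord :: "nat \<times> nat \<times> bool \<Rightarrow> 'a \<Rightarrow> real" where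
  "coord = (\<lambda>(j, i, b) w. if b then Re (h w j i) else Im (h w j i))"

definition interferers :: "nat set" where
  "interferers = {..<Nt} - {k}"

lemma coord_indep: "indep_vars (\<lambda>_. borel) coord coords"
  using iid unfolding iid_CN01_entries_def coords_def coord_def by simp

lemma coord_simps[simp]: "coord (j, i, True) w = Re (h w j i)" "coord (j, i, False) w = Im (h w j i)"
  by (simp_all add: coord_def)

lemma card_interferers: "card interferers = Nt - 1"
  using k by (simp add: interferers_def)

lemma indep_blocks:
  assumes "\<And>l. l \<in> L \<Longrightarrow> K l \<subseteq> coords" "disjoint_family_on K L"
    "\<And>l. l \<in> L \<Longrightarrow> Y l \<in> measurable (PiM (K l) (\<lambda>_. borel)) (N l)"
  shows "indep_vars N (\<lambda>l w. Y l (restrict (\<lambda>p. coord p w) (K l))) L"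
  using indep_vars_compose2[OF indep_vars_restrict[OF coord_indep assms(1,2)] assms(3)] by simp

lemma entry_circ_gauss:
  assumes j: "j < Nt" and i: "i < Nr" shows "circ_gauss (1 / sqrt 2) (\<lambda>w. h w j i)"
proof -
  have "indep_var (PiM {(j,i,True)} (\<lambda>_. borel)) (\<lambda>\<omega>. restrict (\<lambda>p. coord p \<omega>) {(j,i,True)})
                  (PiM {(j,i,False)} (\<lambda>_. borel)) (\<lambda>\<omega>. restrict (\<lambda>p. coord p \<omega>) {(j,i,False)})"
    using j i by (intro indep_var_restrict[OF coord_indep]) (auto simp: coords_def)
  then have "indep_var borel ((\<lambda>f. f (j,i,True)) \<circ> (\<lambda>\<omega>. restrict (\<lambda>p. coord p \<omega>) {(j,i,True)}))
                  borel ((\<lambda>f. f (j,i,False)) \<circ> (\<lambda>\<omega>. restrict (\<lambda>p. coord p \<omega>) {(j,i,False)}))"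
    by (rule indep_var_compose) auto
  then show ?thesis using iid j i unfolding iid_CN01_entries_def circ_gauss_def by (simp add: o_def)
qed

lemma column_indep:
  assumes j: "j < Nt" shows "indep_vars (\<lambda>_. borel) (\<lambda>i w. h w j i) {..<Nr}"
proof -
  have "indep_vars (\<lambda>_. borel) (\<lambda>i w. (\<lambda>f. Complex (f (j,i,True)) (f (j,i,False)))
      (restrict (\<lambda>p. coord p w) {(j,i,True),(j,i,False)})) {..<Nr}"
    using j by (intro indep_blocks) (auto simp: coords_def disjoint_family_on_def)
  then show ?thesis by (rule indep_vars_cong[THEN iffD1, rotated -1]) (auto simp: complex_eq_iff)
qed

text \<open>The projection of a column on a fixed unit vector is \<open>CN(0,1)\<close>, so its squared
  modulus is \<open>Exp(1)\<close>.\<close>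
lemma projection_exponential:
  assumes j: "j < Nt" and c: "(\<Sum>i<Nr. (cmod (c i))^2) = 1"
  shows "distributed M lborel (\<lambda>w. (cmod (\<Sum>i<Nr. c i * h w j i))^2) (exponential_density 1)"
proof -
  have "\<exists>i\<in>{..<Nr}. c i \<noteq> 0" using c by (metis (no_types, lifting) norm_zero sum.neutral zero_neq_one zero_power2)
  then have "circ_gauss (1 / sqrt 2 * sqrt (\<Sum>i<Nr. (cmod (c i))^2)) (\<lambda>w. \<Sum>i<Nr. c i * h w j i)"
    using column_indep[OF j] entry_circ_gauss[OF j] by (intro circ_gauss_lincomb) auto
  then show ?thesis using c by (simp add: circ_gauss_norm_sq_exponential)
qed

text \<open>For a fixed unit vector \<open>c\<close>, the interference \<open>\<Sum>_(j\<noteq>k) |c^T h_j|^2\<close> is a sum of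
  \<open>Nt - 1\<close> independent \<open>Exp(1)\<close> variables, i.e. \<open>Erlang(Nt-2)\<close>.\<close>
lemma interference_erlang:
  assumes c: "(\<Sum>i<Nr. (cmod (c i))^2) = 1"
  shows "distributed M lborel (\<lambda>w. \<Sum>j\<in>interferers. (cmod (\<Sum>i<Nr. c i * h w j i))^2) (erlang_density (Nt - 2) 1)"
proof -
  let ?Y = "\<lambda>j f. (cmod (\<Sum>i<Nr. c i * Complex (f (j,i,True)) (f (j,i,False))))^2"
  have "indep_vars (\<lambda>_. borel) (\<lambda>j w. ?Y j (restrict (\<lambda>p. coord p w) ({j} \<times> {..<Nr} \<times> UNIV))) interferers"
    by (intro indep_blocks) (auto simp: coords_def interferers_def disjoint_family_on_def)
  moreover have "?Y j (restrict (\<lambda>p. coord p w) ({j} \<times> {..<Nr} \<times> UNIV)) = (cmod (\<Sum>i<Nr. c i * h w j i))^2" for j w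
    by (intro arg_cong[where f="\<lambda>z. (cmod z)^2"] sum.cong) (auto simp: complex_eq_iff)
  ultimately have ind: "indep_vars (\<lambda>_. borel) (\<lambda>j w. (cmod (\<Sum>i<Nr. c i * h w j i))^2) interferers"
    by simp
  have "distributed M lborel (\<lambda>w. \<Sum>j\<in>interferers. (cmod (\<Sum>i<Nr. c i * h w j i))^2)
      (erlang_density (card interferers - 1) 1)"
  proof (rule exponential_distributed_sum)
    show "interferers \<noteq> {}" using card_interferers Nt by auto
  qed (use c ind in \<open>auto simp: interferers_def intro: projection_exponential\<close>)
  then show ?thesis using card_interferers by (simp add: numeral_2_eq_2)
qed

text \<open>The signal gain \<open>|h\<^sub>k|\<^sup>2\<close> is a sum of \<open>Nr\<close> independent \<open>Exp(1)\<close> variables.\<close>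
lemma gain_erlang: "distributed M lborel (\<lambda>w. vec_norm_sq Nr (h w k)) (erlang_density (Nr - 1) 1)"
proof -
  have "indep_vars (\<lambda>_. borel) (\<lambda>i w. (\<lambda>z. (cmod z)^2) (h w k i)) {..<Nr}"
    by (rule indep_vars_compose2[OF column_indep[OF k]]) auto
  then have "distributed M lborel (\<lambda>w. \<Sum>i\<in>{..<Nr}. (cmod (h w k i))^2) (erlang_density (card {..<Nr} - 1) 1)"
    using Nr k by (intro exponential_distributed_sum) (auto simp: lessThan_empty_iff intro!: circ_gauss_norm_sq_exponential entry_circ_gauss)
  then show ?thesis by (simp add: vec_norm_sq_def)
qed

end

lemma borel_measurable_cnj[measurable (raw)]:
  "f \<in> borel_measurable M \<Longrightarrow> (\<lambda>x. cnj (f x)) \<in> borel_measurable M"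
  by (simp add: borel_measurable_complex_iff)

definition channel_of :: "(nat \<times> nat \<times> bool \<Rightarrow> real) \<Rightarrow> nat \<Rightarrow> nat \<Rightarrow> complex" where
  "channel_of f j i = Complex (f (j,i,True)) (f (j,i,False))"

text \<open>\<open>P(g \<le> x (1 + r T))\<close> for \<open>T \<sim> Erlang(n)\<close>: the conditional CDF of the SINR given
  the signal gain \<open>g\<close>.\<close>
definition cond_cdf :: "nat \<Rightarrow> real \<Rightarrow> real \<Rightarrow> real \<Rightarrow> ennreal" where
  "cond_cdf n r x g = (\<integral>\<^sup>+t. (if g \<le> x * (1 + r * t) then ennreal (erlang_density n 1 t) else 0) \<partial>lborel)"

lemma cond_cdf_measurable[measurable]: "cond_cdf n r x \<in> borel_measurable borel"
  unfolding cond_cdf_def by measurable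

lemma cond_cdf_emeasure:
  "emeasure (density lborel (erlang_density n 1)) {t. g \<le> x * (1 + r * t)} = cond_cdf n r x g"
proof -
  have [measurable]: "{t. g \<le> x * (1 + r * t)} \<in> sets borel" by measurable
  show ?thesis unfolding cond_cdf_def
    by (subst emeasure_density) (auto intro!: nn_integral_cong simp: indicator_def)
qed

lemma cond_cdf_zero:
  assumes r: "0 \<le> r" and x: "0 \<le> x" shows "cond_cdf n r x 0 = 1"
proof -
  have "cond_cdf n r x 0 = (\<integral>\<^sup>+t. ennreal (erlang_density n 1 t * t ^ 0) \<partial>lborel)"
    unfolding cond_cdf_def
  proof (rule nn_integral_cong)
    fix t :: real
    show "(if 0 \<le> x * (1 + r * t) then ennreal (erlang_density n 1 t) else 0) = ennreal (erlang_density n 1 t * t ^ 0)"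
      using r x by (cases "t < 0") (auto simp: erlang_density_def)
  qed
  also have "\<dots> = 1" by (subst nn_integral_erlang_ith_moment) auto
  finally show ?thesis .
qed

context rayleigh_channel
begin

definition sig_coords :: "(nat \<times> nat \<times> bool) set" where
  "sig_coords = {k} \<times> {..<Nr} \<times> UNIV"
definition int_coords :: "(nat \<times> nat \<times> bool) set" where
  "int_coords = interferers \<times> {..<Nr} \<times> UNIV"
definition sig_space :: "(nat \<times> nat \<times> bool \<Rightarrow> real) measure" where
  "sig_space = PiM sig_coords (\<lambda>_. borel)"
definition int_space :: "(nat \<times> nat \<times> bool \<Rightarrow> real) measure" where
  "int_space = PiM int_coords (\<lambda>_. borel)"
definition sig :: "'a \<Rightarrow> nat \<times> nat \<times> bool \<Rightarrow> real" where
  "sig w = restrict (\<lambda>p. coord p w) sig_coords"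
definition intf :: "'a \<Rightarrow> nat \<times> nat \<times> bool \<Rightarrow> real" where
  "intf w = restrict (\<lambda>p. coord p w) int_coords"

definition gain :: "(nat \<times> nat \<times> bool \<Rightarrow> real) \<Rightarrow> real" where
  "gain a = vec_norm_sq Nr (channel_of a k)"
definition interference :: "(nat \<times> nat \<times> bool \<Rightarrow> real) \<Rightarrow> (nat \<times> nat \<times> bool \<Rightarrow> real) \<Rightarrow> real" where
  "interference a b = (\<Sum>j\<in>interferers. (cmod (herm_inner Nr (channel_of a k) (channel_of b j)))^2 / gain a)"
definition sinr_event :: "real \<Rightarrow> real \<Rightarrow> ((nat \<times> nat \<times> bool \<Rightarrow> real) \<times> (nat \<times> nat \<times> bool \<Rightarrow> real)) set" where
  "sinr_event \<rho> x = {p \<in> space (sig_space \<Otimes>\<^sub>M int_space).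
     gain (fst p) \<le> x * (1 + \<rho> / real Nt * interference (fst p) (snd p))}"

lemma channel_of_sig: "i < Nr \<Longrightarrow> channel_of (sig w) k i = h w k i"
  by (simp add: channel_of_def sig_def sig_coords_def complex_eq_iff)

lemma channel_of_intf: "j \<in> interferers \<Longrightarrow> i < Nr \<Longrightarrow> channel_of (intf w) j i = h w j i"
  by (simp add: channel_of_def intf_def int_coords_def complex_eq_iff)

lemma gain_sig: "gain (sig w) = vec_norm_sq Nr (h w k)"
  unfolding gain_def vec_norm_sq_def by (rule sum.cong) (auto simp: channel_of_sig)

lemma gain_nonneg: "0 \<le> gain a"
  unfolding gain_def vec_norm_sq_def by (auto intro: sum_nonneg)

lemma interference_nonneg: "0 \<le> interference a b"
  unfolding interference_def using gain_nonneg by (auto intro!: sum_nonneg)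

lemma indep_sig_intf: "indep_var sig_space sig int_space intf"
  unfolding sig_space_def int_space_def sig_def intf_def
  by (rule indep_var_restrict[OF coord_indep])
     (auto simp: sig_coords_def int_coords_def coords_def interferers_def k)

lemma sig_measurable[measurable]: "sig \<in> measurable M sig_space"
  using indep_sig_intf by (rule indep_var_rv1)

lemma intf_measurable[measurable]: "intf \<in> measurable M int_space"
  using indep_sig_intf by (rule indep_var_rv2)

lemma channel_of_sig_measurable[measurable]: "i < Nr \<Longrightarrow> (\<lambda>a. channel_of a k i) \<in> borel_measurable sig_space"
  unfolding channel_of_def sig_space_def sig_coords_def by measurable

lemma channel_of_intf_measurable[measurable]:
  "j \<in> interferers \<Longrightarrow> i < Nr \<Longrightarrow> (\<lambda>b. channel_of b j i) \<in> borel_measurable int_space"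
  unfolding channel_of_def int_space_def int_coords_def by measurable

lemma gain_measurable[measurable]: "gain \<in> borel_measurable sig_space"
  unfolding gain_def vec_norm_sq_def by measurable

lemma interference_measurable[measurable]:
  "(\<lambda>p. interference (fst p) (snd p)) \<in> borel_measurable (sig_space \<Otimes>\<^sub>M int_space)"
  unfolding interference_def
proof (rule borel_measurable_sum)
  fix j assume j: "j \<in> interferers"
  have [measurable]: "(\<lambda>p. herm_inner Nr (channel_of (fst p) k) (channel_of (snd p) j)) \<in> borel_measurable (sig_space \<Otimes>\<^sub>M int_space)"
    unfolding herm_inner_def
  proof (rule borel_measurable_sum)
    fix i assume i: "i \<in> {..<Nr}"
    have [measurable]: "(\<lambda>p. channel_of (fst p) k i) \<in> borel_measurable (sig_space \<Otimes>\<^sub>M int_space)"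
      using i by (intro measurable_compose[OF measurable_fst channel_of_sig_measurable]) auto
    have [measurable]: "(\<lambda>p. channel_of (snd p) j i) \<in> borel_measurable (sig_space \<Otimes>\<^sub>M int_space)"
      using i j by (intro measurable_compose[OF measurable_snd channel_of_intf_measurable]) auto
    show "(\<lambda>p. cnj (channel_of (fst p) k i) * channel_of (snd p) j i) \<in> borel_measurable (sig_space \<Otimes>\<^sub>M int_space)"
      by measurable
  qed
  show "(\<lambda>p. (cmod (herm_inner Nr (channel_of (fst p) k) (channel_of (snd p) j)))^2 / gain (fst p))
      \<in> borel_measurable (sig_space \<Otimes>\<^sub>M int_space)"
    by measurable
qed

lemma sinr_event_sets: "sinr_event \<rho> x \<in> sets (sig_space \<Otimes>\<^sub>M int_space)"
  unfolding sinr_event_def by measurable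

lemma X_MRC_le_iff:
  assumes \<rho>: "0 < \<rho>"
  shows "{w \<in> space M. X_MRC Nt Nr \<rho> k (h w) \<le> x} = (\<lambda>w. (sig w, intf w)) -` sinr_event \<rho> x \<inter> space M"
proof -
  have "X_MRC Nt Nr \<rho> k (h w) \<le> x \<longleftrightarrow> gain (sig w) \<le> x * (1 + \<rho> / real Nt * interference (sig w) (intf w))" for w
  proof -
    have "interference (sig w) (intf w)
        = (\<Sum>j\<in>{..<Nt} - {k}. (cmod (herm_inner Nr (h w k) (h w j)))^2 / gain (sig w))"
      unfolding interference_def interferers_def herm_inner_def
      by (intro sum.cong refl arg_cong2[where f="(/)"] arg_cong[where f="\<lambda>z. (cmod z)^2"])
         (auto simp: channel_of_sig channel_of_intf interferers_def)
    moreover have "0 < 1 + \<rho> / real Nt * interference (sig w) (intf w)"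
      using \<rho> interference_nonneg[of "sig w" "intf w"] Nt by (intro add_pos_nonneg) auto
    ultimately show ?thesis unfolding X_MRC_def gain_sig[symmetric]
      by (simp add: pos_divide_le_eq mult.commute)
  qed
  moreover have "w \<in> space M \<Longrightarrow> (sig w, intf w) \<in> space (sig_space \<Otimes>\<^sub>M int_space)" for w
    using measurable_space[OF sig_measurable] measurable_space[OF intf_measurable]
    by (auto simp: space_pair_measure)
  ultimately show ?thesis unfolding sinr_event_def by auto
qed

end

lemma (in prob_space) nn_integral_cond_cdf_erlang:
  assumes G: "distributed M lborel G (erlang_density n 1)"
  shows "(\<integral>\<^sup>+w. cond_cdf m r x (G w) \<partial>M)
    = (\<integral>\<^sup>+t. ennreal (erlang_density m 1 t) * ennreal (erlang_CDF n 1 (x * (1 + r * t))) \<partial>lborel)"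
proof -
  let ?f = "\<lambda>g t. ennreal (erlang_density n 1 g) * (if g \<le> x * (1 + r * t) then ennreal (erlang_density m 1 t) else 0)"
  have "(\<integral>\<^sup>+w. cond_cdf m r x (G w) \<partial>M) = (\<integral>\<^sup>+g. ennreal (erlang_density n 1 g) * cond_cdf m r x g \<partial>lborel)"
    by (rule distributed_nn_integral[OF G, symmetric]) simp
  also have "\<dots> = (\<integral>\<^sup>+g. \<integral>\<^sup>+t. ?f g t \<partial>lborel \<partial>lborel)"
    unfolding cond_cdf_def by (intro nn_integral_cong nn_integral_cmult[symmetric]) measurable
  also have "\<dots> = (\<integral>\<^sup>+t. \<integral>\<^sup>+g. ?f g t \<partial>lborel \<partial>lborel)"
    by (rule lborel_pair.Fubini'[symmetric]) measurable
  also have "\<dots> = (\<integral>\<^sup>+t. ennreal (erlang_density m 1 t) * ennreal (erlang_CDF n 1 (x * (1 + r * t))) \<partial>lborel)"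
  proof (rule nn_integral_cong)
    fix t :: real
    have "(\<integral>\<^sup>+g. ?f g t \<partial>lborel)
        = (\<integral>\<^sup>+g. ennreal (erlang_density m 1 t) * (ennreal (erlang_density n 1 g) * indicator {.. x * (1 + r * t)} g) \<partial>lborel)"
      by (intro nn_integral_cong) (auto simp: indicator_def mult.commute)
    also have "\<dots> = ennreal (erlang_density m 1 t) * (\<integral>\<^sup>+g. ennreal (erlang_density n 1 g) * indicator {.. x * (1 + r * t)} g \<partial>lborel)"
      by (rule nn_integral_cmult) measurable
    finally show "(\<integral>\<^sup>+g. ?f g t \<partial>lborel) = ennreal (erlang_density m 1 t) * ennreal (erlang_CDF n 1 (x * (1 + r * t)))"
      by (simp add: nn_integral_erlang_density)
  qed
  finally show ?thesis .
qed

context rayleigh_channel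
begin

text \<open>Given the desired column (gain \<open>G > 0\<close>), the interference is \<open>\<Sum>_(j\<noteq>k) |u^H h_j|^2\<close> with
  the unit vector \<open>u = h\<^sub>k / |h\<^sub>k|\<close>.\<close>
lemma interference_unit_projection:
  assumes G: "0 < gain a"
  obtains c where "(\<Sum>i<Nr. (cmod (c i))^2) = 1"
    and "\<And>w. interference a (intf w) = (\<Sum>j\<in>interferers. (cmod (\<Sum>i<Nr. c i * h w j i))^2)"
proof
  define c where "c i = cnj (channel_of a k i) / complex_of_real (sqrt (gain a))" for i
  have "(\<Sum>i<Nr. (cmod (c i))^2) = (\<Sum>i<Nr. (cmod (channel_of a k i))^2) / gain a"
    using G by (simp add: c_def norm_divide power_divide sum_divide_distrib)
  then show "(\<Sum>i<Nr. (cmod (c i))^2) = 1"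
    using G unfolding gain_def vec_norm_sq_def by simp
  fix w
  show "interference a (intf w) = (\<Sum>j\<in>interferers. (cmod (\<Sum>i<Nr. c i * h w j i))^2)"
    unfolding interference_def
  proof (rule sum.cong)
    fix j assume j: "j \<in> interferers"
    have "herm_inner Nr (channel_of a k) (channel_of (intf w) j) = (\<Sum>i<Nr. cnj (channel_of a k i) * h w j i)"
      unfolding herm_inner_def using j by (intro sum.cong) (auto simp: channel_of_intf)
    also have "\<dots> = complex_of_real (sqrt (gain a)) * (\<Sum>i<Nr. c i * h w j i)"
      using G by (simp add: c_def sum_distrib_left)
    finally show "(cmod (herm_inner Nr (channel_of a k) (channel_of (intf w) j)))^2 / gain a
        = (cmod (\<Sum>i<Nr. c i * h w j i))^2"
      using G by (simp add: norm_mult power_mult_distrib)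
  qed simp
qed

lemma sinr_event_given_sig:
  assumes \<rho>: "0 < \<rho>" and x: "0 \<le> x" and a: "a \<in> space sig_space"
  shows "emeasure (distr M int_space intf) (Pair a -` sinr_event \<rho> x) = cond_cdf (Nt - 2) (\<rho> / real Nt) x (gain a)"
proof -
  let ?E = "{t. gain a \<le> x * (1 + \<rho> / real Nt * t)}"
  have "Pair a -` sinr_event \<rho> x \<in> sets int_space" using sets_Pair1[OF sinr_event_sets] .
  then have "emeasure (distr M int_space intf) (Pair a -` sinr_event \<rho> x)
      = emeasure M (intf -` (Pair a -` sinr_event \<rho> x) \<inter> space M)"
    by (rule emeasure_distr[OF intf_measurable])
  also have "intf -` (Pair a -` sinr_event \<rho> x) \<inter> space M = {w \<in> space M. interference a (intf w) \<in> ?E}"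
    using a measurable_space[OF intf_measurable] by (auto simp: sinr_event_def space_pair_measure)
  finally have eq: "emeasure (distr M int_space intf) (Pair a -` sinr_event \<rho> x)
      = emeasure M {w \<in> space M. interference a (intf w) \<in> ?E}" .
  show ?thesis
  proof (cases "gain a = 0")
    case True
    then show ?thesis using eq x \<rho> cond_cdf_zero[of "\<rho> / real Nt" x]
      by (simp add: interference_def emeasure_space_1)
  next
    case False
    then have "0 < gain a" using gain_nonneg[of a] by simp
    then obtain c where c: "(\<Sum>i<Nr. (cmod (c i))^2) = 1"
      and T: "\<And>w. interference a (intf w) = (\<Sum>j\<in>interferers. (cmod (\<Sum>i<Nr. c i * h w j i))^2)"
      by (rule interference_unit_projection[of a]) auto
    let ?T = "\<lambda>w. \<Sum>j\<in>interferers. (cmod (\<Sum>i<Nr. c i * h w j i))^2"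
    have D: "distributed M lborel ?T (erlang_density (Nt - 2) 1)" by (rule interference_erlang[OF c])
    have [measurable]: "?E \<in> sets borel" by measurable
    have "emeasure M {w \<in> space M. interference a (intf w) \<in> ?E} = emeasure M (?T -` ?E \<inter> space M)"
      unfolding T by (rule arg_cong[where f="emeasure M"]) auto
    also have "\<dots> = emeasure (distr M lborel ?T) ?E"
      using D unfolding distributed_def by (intro emeasure_distr[symmetric]) auto
    also have "\<dots> = emeasure (density lborel (erlang_density (Nt - 2) 1)) ?E"
      using D unfolding distributed_def by simp
    also have "\<dots> = cond_cdf (Nt - 2) (\<rho> / real Nt) x (gain a)" by (rule cond_cdf_emeasure)
    finally show ?thesis using eq by simp
  qed
qed

lemma prob_X_MRC_le_conditional:
  assumes \<rho>: "0 < \<rho>" and x: "0 \<le> x"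
  shows "emeasure M {w \<in> space M. X_MRC Nt Nr \<rho> k (h w) \<le> x}
    = (\<integral>\<^sup>+w. cond_cdf (Nt - 2) (\<rho> / real Nt) x (vec_norm_sq Nr (h w k)) \<partial>M)"
proof -
  let ?PS = "distr M sig_space sig" and ?PI = "distr M int_space intf"
  interpret PI: prob_space ?PI by (rule prob_space_distr[OF intf_measurable])
  have E: "sinr_event \<rho> x \<in> sets (sig_space \<Otimes>\<^sub>M int_space)" by (rule sinr_event_sets)
  have "emeasure M {w \<in> space M. X_MRC Nt Nr \<rho> k (h w) \<le> x}
      = emeasure (distr M (sig_space \<Otimes>\<^sub>M int_space) (\<lambda>w. (sig w, intf w))) (sinr_event \<rho> x)"
    unfolding X_MRC_le_iff[OF \<rho>] by (rule emeasure_distr[symmetric]) (auto simp: E)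
  also have "\<dots> = emeasure (?PS \<Otimes>\<^sub>M ?PI) (sinr_event \<rho> x)"
    using indep_sig_intf unfolding indep_var_distribution_eq by simp
  also have "\<dots> = (\<integral>\<^sup>+a. emeasure ?PI (Pair a -` sinr_event \<rho> x) \<partial>?PS)"
    by (rule PI.emeasure_pair_measure_alt) (simp add: E)
  also have "\<dots> = (\<integral>\<^sup>+a. cond_cdf (Nt - 2) (\<rho> / real Nt) x (gain a) \<partial>?PS)"
    by (rule nn_integral_cong) (auto intro!: sinr_event_given_sig[OF \<rho> x])
  also have "\<dots> = (\<integral>\<^sup>+w. cond_cdf (Nt - 2) (\<rho> / real Nt) x (gain (sig w)) \<partial>M)"
    by (rule nn_integral_distr) measurable
  finally show ?thesis by (simp add: gain_sig)
qed

end

text \<open>Exponentially tilted moments of the Erlang density, obtained by recognising a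
  rescaled \<open>Erlang(n+q)\<close> density with rate \<open>1+s\<close>.\<close>
lemma erlang_tilted_moment:
  fixes s :: real assumes s: "0 \<le> s"
  shows "has_bochner_integral lborel (\<lambda>t. erlang_density n 1 t * t^q * exp (- (s * t)))
           (fact (n+q) / (fact n * (1+s)^(n+q+1)))"
proof -
  let ?C = "fact (n+q) / (fact n * (1+s)^(n+q+1)) :: real"
  have l: "(0::real) < 1 + s" using s by simp
  have "has_bochner_integral lborel (erlang_density (n+q) (1+s)) 1"
  proof (rule has_bochner_integral_nn_integral)
    show "(\<integral>\<^sup>+t. ennreal (erlang_density (n+q) (1+s) t) \<partial>lborel) = ennreal 1"
      using nn_integral_erlang_ith_moment[OF l, of "n+q" 0] by simp
  qed (auto simp: l less_imp_le)
  then have "has_bochner_integral lborel (\<lambda>t. ?C * erlang_density (n+q) (1+s) t) (?C * 1)"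
    by (rule has_bochner_integral_mult_right)
  moreover have "?C * erlang_density (n+q) (1+s) t = erlang_density n 1 t * t^q * exp (- (s * t))" for t
  proof (cases "t < 0")
    case False
    have cancel: "C / (F * P) * (P * T * E / C) = T * E / F" if "C \<noteq> 0" "F \<noteq> 0" "P \<noteq> 0" for C F P T E :: real
      using that by (simp add: field_simps)
    have "?C * erlang_density (n+q) (1+s) t = ?C * ((1+s)^(n+q+1) * t^(n+q) * exp (- ((1+s) * t)) / fact (n+q))"
      using False by (simp add: erlang_density_def algebra_simps)
    also have "\<dots> = t^(n+q) * exp (- ((1+s) * t)) / fact n"
      by (rule cancel) (use l in auto)
    also have "\<dots> = erlang_density n 1 t * t^q * exp (- (s * t))"
    proof -
      have "exp (- t - s * t) = exp (- t) * exp (- (s * t))" by (simp add: mult_exp_exp)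
      then show ?thesis using False by (simp add: erlang_density_def power_add field_simps)
    qed
    finally show ?thesis .
  qed (simp add: erlang_density_def)
  ultimately show ?thesis by simp
qed

lemma erlang_CDF_term_expand:
  fixes x r t e :: real
  shows "e * ((x * (1 + r * t))^m * exp (- (x * (1 + r * t))) / fact m)
    = (\<Sum>q\<le>m. (x^m * exp (- x) / fact m * (of_nat (m choose q) * r^q)) * (e * t^q * exp (- ((r * x) * t))))"
proof -
  have binomial: "(1 + r * t)^m = (\<Sum>q\<le>m. of_nat (m choose q) * (r * t)^q)"
    using binomial_ring[of "r * t" 1 m] by (simp add: add.commute)
  have tilt: "exp (- (x * (1 + r * t))) = exp (- x) * exp (- ((r * x) * t))"
    by (simp add: mult_exp_exp algebra_simps)
  have "e * ((x * (1 + r * t))^m * exp (- (x * (1 + r * t))) / fact m)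
      = e * (x^m * (1 + r * t)^m * (exp (- x) * exp (- ((r * x) * t))) / fact m)"
    by (simp only: tilt power_mult_distrib)
  also have "\<dots> = (x^m * exp (- x) / fact m) * e * exp (- ((r * x) * t)) * (1 + r * t)^m"
    by (simp add: field_simps)
  also have "\<dots> = (\<Sum>q\<le>m. (x^m * exp (- x) / fact m * (of_nat (m choose q) * r^q)) * (e * t^q * exp (- ((r * x) * t))))"
    unfolding binomial sum_distrib_left by (intro sum.cong) (auto simp: power_mult_distrib)
  finally show ?thesis .
qed

text \<open>The integral of \<open>erlang_density n 1 t * erlang_CDF K 1 (x (1 + r t))\<close> in closed form,
  obtained by integrating the binomial expansion termwise with the tilted moments.\<close>
lemma integral_erlang_times_erlang_CDF:
  fixes x r :: real assumes x: "0 \<le> x" and r: "0 \<le> r"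
  shows "has_bochner_integral lborel (\<lambda>t. erlang_density n 1 t * erlang_CDF K 1 (x * (1 + r * t)))
     (1 - (\<Sum>m\<le>K. \<Sum>q\<le>m. (x^m * exp (- x) / fact m * (of_nat (m choose q) * r^q))
            * (fact (n+q) / (fact n * (1 + r*x)^(n+q+1)))))"
proof -
  let ?c = "\<lambda>m q. x^m * exp (- x) / fact m * (of_nat (m choose q) * r^q)"
  let ?f = "\<lambda>q t. erlang_density n 1 t * t^q * exp (- ((r * x) * t))"
  have rx: "0 \<le> r * x" using r x by simp
  have "has_bochner_integral lborel (\<lambda>t. erlang_density n 1 t) 1"
    using erlang_tilted_moment[OF order_refl, of n 0] by simp
  then have "has_bochner_integral lborel (\<lambda>t. erlang_density n 1 t - (\<Sum>m\<le>K. \<Sum>q\<le>m. ?c m q * ?f q t))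
     (1 - (\<Sum>m\<le>K. \<Sum>q\<le>m. ?c m q * (fact (n+q) / (fact n * (1 + r*x)^(n+q+1)))))"
    by (intro has_bochner_integral_diff has_bochner_integral_sum has_bochner_integral_mult_right erlang_tilted_moment[OF rx])
  moreover have "erlang_density n 1 t * erlang_CDF K 1 (x * (1 + r * t)) = erlang_density n 1 t - (\<Sum>m\<le>K. \<Sum>q\<le>m. ?c m q * ?f q t)" for t
  proof (cases "t < 0")
    case False
    then have "0 \<le> x * (1 + r * t)" using x r by simp
    then have "erlang_density n 1 t * erlang_CDF K 1 (x * (1 + r * t))
        = erlang_density n 1 t - (\<Sum>m\<le>K. erlang_density n 1 t * ((x * (1 + r * t))^m * exp (- (x * (1 + r * t))) / fact m))"
      by (simp add: erlang_CDF_def right_diff_distrib sum_distrib_left)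
    then show ?thesis by (simp only: erlang_CDF_term_expand)
  qed (simp add: erlang_density_def)
  ultimately show ?thesis by simp
qed

lemma closed_form_term:
  fixes x e r D :: real
  assumes qm: "q \<le> m" and D: "0 < D"
  shows "x^m * e / fact m * (of_nat (m choose q) * r^q) * (fact (n+q) / (fact n * D^(n+q+1)))
       = e / D^(n+1) * (of_nat ((n+q) choose q) * r^q / fact (m-q) * x^m / D^q)"
proof -
  have b1: "(of_nat (m choose q) :: real) = fact m / (fact q * fact (m - q))" using qm by (rule binomial_fact)
  have b2: "(of_nat ((n+q) choose q) :: real) = fact (n+q) / (fact q * fact (n + q - q))" by (rule binomial_fact) simp
  have p: "D^(n+q+1) = D^(n+1) * D^q" by (simp add: power_add[symmetric])
  show ?thesis unfolding b1 b2 p using D by (simp add: field_simps)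
qed

lemma closed_form_sum:
  fixes x \<rho> :: real
  assumes Nt: "2 \<le> Nt" and Nr: "1 \<le> Nr" and D: "0 < 1 + \<rho> / real Nt * x"
  shows "(\<Sum>m\<le>Nr - 1. \<Sum>q\<le>m. (x^m * exp (- x) / fact m * (of_nat (m choose q) * (\<rho> / real Nt)^q))
            * (fact (Nt - 2 + q) / (fact (Nt - 2) * (1 + \<rho> / real Nt * x)^(Nt - 2 + q + 1))))
    = exp (- x) / (1 + \<rho> / real Nt * x) ^ (Nt - 1) *
        (\<Sum>k'<Nr. \<Sum>p\<le>k'. alpha_coef Nt \<rho> p k' * x ^ k' / (1 + \<rho> / real Nt * x) ^ p)"
proof -
  have "{..Nr - 1} = {..<Nr}" using Nr by auto
  moreover have "Nt - 2 + 1 = Nt - 1" "Nt - 2 + q = Nt + q - 2" for q using Nt by auto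
  ultimately show ?thesis
    unfolding sum_distrib_left alpha_coef_def
    using closed_form_term[OF _ D, of _ _ x "exp (- x)" "\<rho> / real Nt" "Nt - 2"]
    by (intro sum.cong) auto
qed

theorem mainTheorem1:
  fixes M :: "'a measure" and h :: "'a \<Rightarrow> nat \<Rightarrow> nat \<Rightarrow> complex"
    and Nt Nr k :: nat and \<rho> x :: real
  assumes "prob_space M"
    and "Nt \<ge> 2" and "Nr \<ge> 1" and "\<rho> > 0"
    and "iid_CN01_entries M Nt Nr h"
    and "k < Nt"
    and "x \<ge> 0"
  shows "measure M {w \<in> space M. X_MRC Nt Nr \<rho> k (h w) \<le> x} =
    1 - exp (- x) / (1 + \<rho> / real Nt * x) ^ (Nt - 1) *
      (\<Sum>k'<Nr. \<Sum>p\<le>k'. alpha_coef Nt \<rho> p k' * x ^ k' / (1 + \<rho> / real Nt * x) ^ p)"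
proof -
  interpret rayleigh_channel M Nt Nr k h
    using assms by (simp add: rayleigh_channel_def rayleigh_channel_axioms_def)
  let ?r = "\<rho> / real Nt"
  let ?f = "\<lambda>t. erlang_density (Nt - 2) 1 t * erlang_CDF (Nr - 1) 1 (x * (1 + ?r * t))"
  have r: "0 \<le> ?r" and D: "0 < 1 + ?r * x" using assms by (simp_all add: add_pos_nonneg)
  note integral = integral_erlang_times_erlang_CDF[OF \<open>x \<ge> 0\<close> r, of "Nt - 2" "Nr - 1"]
  have "measure M {w \<in> space M. X_MRC Nt Nr \<rho> k (h w) \<le> x}
      = enn2real (\<integral>\<^sup>+t. ennreal (erlang_density (Nt - 2) 1 t) * ennreal (erlang_CDF (Nr - 1) 1 (x * (1 + ?r * t))) \<partial>lborel)"
    using assms by (simp add: measure_def prob_X_MRC_le_conditional nn_integral_cond_cdf_erlang[OF gain_erlang])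
  also have "\<dots> = integral\<^sup>L lborel ?f"
    using borel_measurable_integrable[OF integrable.intros[OF integral]]
    by (intro enn2real_nn_integral_eq_integral) (auto simp: ennreal_mult'[symmetric])
  also have "\<dots> = 1 - exp (- x) / (1 + ?r * x) ^ (Nt - 1) *
      (\<Sum>k'<Nr. \<Sum>p\<le>k'. alpha_coef Nt \<rho> p k' * x ^ k' / (1 + ?r * x) ^ p)"
    using has_bochner_integral_integral_eq[OF integral] closed_form_sum[OF assms(2,3), of \<rho> x] D
    by (simp add: mult.commute)
  finally show ?thesis .
qed

end
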